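(* Let $\gamma>0$, $s\in(0,q^{-1/2})$, $h\in\mathcal M_s$, and let $g\in\mathcal I^\infty_\gamma$ be such that the series $\mu_\gamma(g)(t)$ converges absolutely for all $|t|\le(1-q)^{-1}q^{-1/2}s^{-1}$. Then $g*_\gamma h$ is a well-defined function and belongs to $\mathcal M_s$.
   Context: Fix $q\in(0,1)$. Notation: $(a;q)_k=\prod_{j=0}^{k-1}(1-aq^j)$, $(a;q)_\infty=\lim_k(a;q)_k$, $[k]_q!=(q;q)_k/(1-q)^k$, $e_q(x)=1/(x;q)_\infty$. The $q$-derivative is $(\partial f)(x)=\frac{f(x)-f(qx)}{(1-q)x}$ (extended to $x=0$ by continuity for $f$ holomorphic near $0$). For $\gamma>0$, $L(\gamma)=\{\pm q^k\gamma:k\in\mathbb Z\}$ and $\int_\gamma f=(1-q)\sum_{k\in\mathbb Z}\sum_{\epsilon=\pm1}q^k\gamma f(\epsilon q^k\gamma)$ whenever absolutely convergent. $\mathcal I^\infty_\gamma$ is the set of functions $f$ on $L(\gamma)$ with $\int_\gamma|f(x)x^e|<\infty$ for all integers $e\ge0$. Moments: $\mu_{e,\gamma}(f)=q^{(e^2+e)/2}\int_\gamma f(x)x^e$. The $q$-moment series is $\mu_\gamma(f)(t)=\sum_{k\ge0}\mu_{k,\gamma}(f)t^k/[k]_q!$. The $q$-convolution of $f\in\mathcal I^\infty_\gamma$ with $g$ is $(f*_\gamma g)(x)=\sum_{e\ge0}\frac{(-1)^e\mu_{e,\gamma}(f)}{[e]_q!}(\partial^eg)(x)$ at all $x$ where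 the $q$-derivatives are defined and the series converges absolutely. For $s>0$, $\mathcal M_s$ is the set of functions $F(x)=f(x)e_{q^2}(-x^2)$ (holomorphic on $|\mathrm{Im}\,x|<1$) where $f(x)=\sum_{l\ge0}a_lx^l$ with $|a_l|\le Cs^lq^{l^2/2}$ for all $l$, for some $C>0$. *)

theory Defs
  imports "HOL-Analysis.Analysis"
begin

definition qpoch_inf :: "real \<Rightarrow> complex \<Rightarrow> complex" where
  "qpoch_inf q a = prodinf (\<lambda>j. 1 - a * of_real (q ^ j))"

definition qexp :: "real \<Rightarrow> complex \<Rightarrow> complex" where
  "qexp q x = 1 / qpoch_inf q x"

definition qfact :: "real \<Rightarrow> nat \<Rightarrow> real" where
  "qfact q k = (\<Prod>j<k. 1 - q ^ (j + 1)) / (1 - q) ^ k"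

definition qD :: "real \<Rightarrow> (complex \<Rightarrow> complex) \<Rightarrow> complex \<Rightarrow> complex" where
  "qD q f x = (if x = 0
      then Lim (at (0::complex)) (\<lambda>y. (f y - f (of_real q * y)) / (of_real (1 - q) * y))
      else (f x - f (of_real q * x)) / (of_real (1 - q) * x))"

text \<open>Index set for the lattice L(gamma): pairs (k, epsilon).\<close>
definition Lidx :: "(int \<times> real) set" where
  "Lidx = UNIV \<times> {-1, 1}"

definition jint_abs_conv :: "real \<Rightarrow> real \<Rightarrow> (real \<Rightarrow> complex) \<Rightarrow> bool" where
  "jint_abs_conv q \<gamma> f =
     ((\<lambda>(k, \<epsilon>). norm (of_real (q powi k * \<gamma>) * f (\<epsilon> * q powi k * \<gamma>))) summable_on Lidx)"

definition jint :: "real \<Rightarrow> real \<Rightarrow> (real \<Rightarrow> complex) \<Rightarrow> complex" where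
  "jint q \<gamma> f = of_real (1 - q) *
     infsum (\<lambda>(k, \<epsilon>). of_real (q powi k * \<gamma>) * f (\<epsilon> * q powi k * \<gamma>)) Lidx"

definition Iinf :: "real \<Rightarrow> real \<Rightarrow> (real \<Rightarrow> complex) set" where
  "Iinf q \<gamma> = {f. \<forall>e::nat. jint_abs_conv q \<gamma> (\<lambda>x. f x * of_real (x ^ e))}"

definition qmoment :: "real \<Rightarrow> real \<Rightarrow> (real \<Rightarrow> complex) \<Rightarrow> nat \<Rightarrow> complex" where
  "qmoment q \<gamma> f e = of_real (q ^ ((e\<^sup>2 + e) div 2)) * jint q \<gamma> (\<lambda>x. f x * of_real (x ^ e))"

definition qconv_term ::
  "real \<Rightarrow> real \<Rightarrow> (real \<Rightarrow> complex) \<Rightarrow> (complex \<Rightarrow> complex) \<Rightarrow> complex \<Rightarrow> nat \<Rightarrow> complex" where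
  "qconv_term q \<gamma> f g x e =
     (-1) ^ e * qmoment q \<gamma> f e / of_real (qfact q e) * ((qD q ^^ e) g) x"

definition qconv ::
  "real \<Rightarrow> real \<Rightarrow> (real \<Rightarrow> complex) \<Rightarrow> (complex \<Rightarrow> complex) \<Rightarrow> complex \<Rightarrow> complex" where
  "qconv q \<gamma> f g x = (\<Sum>e. qconv_term q \<gamma> f g x e)"

definition Ms :: "real \<Rightarrow> real \<Rightarrow> (complex \<Rightarrow> complex) set" where
  "Ms q s = {F. \<exists>a :: nat \<Rightarrow> complex. \<exists>C > 0.
      (\<forall>l. norm (a l) \<le> C * s ^ l * q powr (real l ^ 2 / 2)) \<and>
      (\<forall>x. \<bar>Im x\<bar> < 1 \<longrightarrow> F x = (\<Sum>l. a l * x ^ l) * qexp (q\<^sup>2) (- (x\<^sup>2)))}"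

end

theory Submission
  imports Defs
begin

text \<open>
  Write \<open>h = f \<cdot> E\<close> with \<open>E(x) = e_{q^2}(-x^2)\<close>. Since \<open>E(q x) = (1 + x^2) E(x)\<close>, the q-derivative of
  \<open>f \<cdot> E\<close> is again of the form \<open>f\<^sub>1 \<cdot> E\<close>, the coefficients of \<open>f\<^sub>1\<close> being an explicit linear
  combination of two neighbouring coefficients of \<open>f\<close>. With \<open>p = \<surd>q\<close> and \<open>R = 1/((1-q) p s)\<close>, the
  e-th iterate has coefficients bounded by \<open>C R^e s^m p^{m^2} / (q;q)\<^sub>m\<close>, and \<open>1/(q;q)\<^sub>m\<close> is bounded
  uniformly in \<open>m\<close>. Hence the convolution series is dominated by the product of the moment series
  at \<open>t = R\<close> and the convergent series \<open>\<Sum>\<^sub>m s^m p^{m^2} |x|^m\<close>; exchanging the two summations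
  writes \<open>g *\<^sub>\<gamma> h\<close> again as \<open>f\<^sub>\<infinity> \<cdot> E\<close> with coefficients of order \<open>s^m p^{m^2}\<close>.
\<close>

definition power_series :: "(nat \<Rightarrow> complex) \<Rightarrow> complex \<Rightarrow> complex" where
  "power_series c x = (\<Sum>m. c m * x ^ m)"

lemma summable_power_mult_power_square:
  fixes B p :: real
  assumes "0 \<le> B" "0 \<le> p" "p < 1"
  shows "summable (\<lambda>m. B ^ m * p ^ (m\<^sup>2))"
proof -
  have "(\<lambda>n. B * p ^ n) \<longlonglongrightarrow> B * 0"
    by (intro tendsto_mult tendsto_const LIMSEQ_power_zero) (use assms in auto)
  then have "eventually (\<lambda>n. B * p ^ n < 1/2) sequentially"
    by (intro order_tendstoD(2)) auto
  then obtain N where N: "\<And>n. n \<ge> N \<Longrightarrow> B * p ^ n < 1/2"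
    by (auto simp: eventually_sequentially)
  show ?thesis
  proof (rule summable_ratio_test[where c="1/2" and N=N])
    fix n assume "N \<le> n"
    have "B * p ^ (n + Suc n) \<le> B * p ^ n"
      using assms by (intro mult_left_mono power_decreasing) auto
    with N[OF \<open>N \<le> n\<close>] have "B * p ^ (n + Suc n) \<le> 1/2" by linarith
    then have "B ^ n * p ^ (n\<^sup>2) * (B * p ^ (n + Suc n)) \<le> B ^ n * p ^ (n\<^sup>2) * (1/2)"
      using assms by (intro mult_left_mono) auto
    moreover have "(Suc n)\<^sup>2 = n\<^sup>2 + (n + Suc n)" by (simp add: power2_eq_square)
    ultimately show "norm (B ^ Suc n * p ^ (Suc n)\<^sup>2) \<le> 1/2 * norm (B ^ n * p ^ n\<^sup>2)"
      using assms by (simp add: power_add abs_mult mult_ac)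
  qed simp
qed

lemma summable_norm_gaussian_power_series:
  fixes c :: "nat \<Rightarrow> complex"
  assumes c: "\<And>m. norm (c m) \<le> K * s ^ m * p ^ (m\<^sup>2)" and "0 \<le> s" "0 \<le> p" "p < 1"
  shows "summable (\<lambda>m. norm (c m * x ^ m))"
proof (rule summable_comparison_test')
  show "summable (\<lambda>m. K * ((s * norm x) ^ m * p ^ (m\<^sup>2)))"
    using assms by (intro summable_mult summable_power_mult_power_square) auto
  show "norm (norm (c m * x ^ m)) \<le> K * ((s * norm x) ^ m * p ^ (m\<^sup>2))" for m
    using mult_right_mono[OF c[of m] norm_ge_zero[of "x ^ m"]]
    by (simp add: norm_mult norm_power power_mult_distrib mult_ac)
qed

lemma suminf_swap_product_bound:
  fixes G :: "nat \<Rightarrow> nat \<Rightarrow> 'a::banach"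
  assumes G_le: "\<And>e m. norm (G e m) \<le> u e * v m"
    and u: "summable u" "\<And>e. 0 \<le> u e" and v: "summable v" "\<And>m. 0 \<le> v m"
  shows "(\<Sum>e. \<Sum>m. G e m) = (\<Sum>m. \<Sum>e. G e m)"
proof -
  have suminf_eq_infsum: "suminf f = infsum f UNIV" if "f summable_on UNIV" for f :: "nat \<Rightarrow> 'a"
    using has_sum_imp_sums[OF has_sum_infsum[OF that]] by (rule sums_unique[symmetric])
  have "(\<lambda>(e, m). u e * v m) summable_on UNIV \<times> UNIV"
  proof (rule summable_on_SigmaI)
    show "((\<lambda>m. case (e, m) of (e, m) \<Rightarrow> u e * v m) has_sum u e * suminf v) UNIV" for e
      using has_sum_cmult_right[OF sums_nonneg_imp_has_sum[OF summable_sums[OF v(1)] v(2)]] by simp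
    show "(\<lambda>e. u e * suminf v) summable_on UNIV"
      by (intro summable_nonneg_imp_summable_on summable_mult2 u mult_nonneg_nonneg suminf_nonneg v)
  qed (simp add: u(2) v(2))
  then have "(\<lambda>(e, m). G e m) abs_summable_on UNIV \<times> UNIV"
    by (rule Infinite_Sum.abs_summable_on_comparison_test') (simp add: G_le split: prod.split)
  then have G: "(\<lambda>(e, m). G e m) summable_on UNIV \<times> UNIV"
    by (rule abs_summable_summable)
  then have G': "(\<lambda>(m, e). G e m) summable_on UNIV \<times> UNIV"
    by (subst summable_on_swap) (simp add: case_prod_beta)
  have rows: "G e summable_on UNIV" for e
    by (rule norm_summable_imp_summable_on, rule summable_comparison_test'[OF summable_mult[OF v(1), of "u e"]])
       (simp add: G_le)
  have cols: "(\<lambda>e. G e m) summable_on UNIV" for m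
    by (rule norm_summable_imp_summable_on, rule summable_comparison_test'[OF summable_mult2[OF u(1), of "v m"]])
       (simp add: G_le)
  have "(\<lambda>e. infsum (G e) UNIV) summable_on UNIV"
    using summable_on_SigmaD[OF G] rows by simp
  moreover have "(\<lambda>m. infsum (\<lambda>e. G e m) UNIV) summable_on UNIV"
    using summable_on_SigmaD[OF G'] cols by (simp add: case_prod_beta)
  ultimately show ?thesis
    using infsum_swap_banach[OF G] by (simp add: suminf_eq_infsum rows cols)
qed

lemma convergent_prod_qpoch:
  fixes Q :: real and a :: complex
  assumes "0 \<le> Q" "Q < 1"
  shows "convergent_prod (\<lambda>j. 1 - a * of_real (Q ^ j))"
proof (intro abs_convergent_prod_imp_convergent_prod summable_imp_abs_convergent_prod)
  have "summable (\<lambda>j. norm a * Q ^ j)"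
    using assms by (intro summable_mult summable_geometric) auto
  then show "summable (\<lambda>j. norm (1 - a * of_real (Q ^ j) - 1))"
    using assms by (simp add: norm_mult norm_power abs_of_nonneg)
qed

lemma norm_qpoch_inf_minus_one_le:
  assumes Q: "0 \<le> Q" "Q < 1"
  shows "norm (qpoch_inf Q a - 1) \<le> exp (norm a / (1 - Q)) - 1"
proof -
  define f where "f j = - a * of_real (Q ^ j)" for j
  have "norm ((\<Prod>j\<le>n. 1 + f j) - 1) \<le> exp (norm a / (1 - Q)) - 1" for n
  proof -
    have "norm ((\<Prod>j\<le>n. 1 + f j) - 1) \<le> (\<Prod>j\<le>n. 1 + norm (f j)) - 1"
      by (rule norm_prod_minus1_le_prod_minus1)
    also have "(\<Prod>j\<le>n. 1 + norm (f j)) \<le> (\<Prod>j\<le>n. exp (norm (f j)))"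
      by (intro prod_mono conjI add_nonneg_nonneg) (auto simp: add.commute exp_ge_add_one_self)
    also have "\<dots> = exp (norm a * (\<Sum>j\<le>n. Q ^ j))"
      using Q by (simp add: f_def exp_sum sum_distrib_left norm_mult norm_power)
    also have "(\<Sum>j\<le>n. Q ^ j) = (1 - Q ^ Suc n) / (1 - Q)"
      using Q by (simp add: lessThan_Suc_atMost[symmetric] geometric_sum field_simps)
    also have "norm a * \<dots> \<le> norm a / (1 - Q)"
      using Q by (simp add: divide_right_mono mult_left_le)
    finally show ?thesis by simp
  qed
  moreover have "(\<lambda>n. \<Prod>j\<le>n. 1 + f j) \<longlonglongrightarrow> qpoch_inf Q a"
    using convergent_prod_LIMSEQ[OF convergent_prod_qpoch[OF Q, of a]]
    by (simp add: qpoch_inf_def f_def)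
  then have "(\<lambda>n. norm ((\<Prod>j\<le>n. 1 + f j) - 1)) \<longlonglongrightarrow> norm (qpoch_inf Q a - 1)"
    by (intro tendsto_intros)
  ultimately show ?thesis
    by (intro Lim_bounded[where M=0]) auto
qed

lemma isCont_qpoch_inf_0:
  assumes "0 \<le> Q" "Q < 1"
  shows "isCont (qpoch_inf Q) 0"
proof -
  have "((\<lambda>a::complex. exp (norm a / (1 - Q)) - 1) \<longlongrightarrow> 0) (at 0)"
    using assms by (auto intro!: tendsto_eq_intros)
  then have "((\<lambda>a. qpoch_inf Q a - 1) \<longlongrightarrow> 0) (at 0)"
    by (rule Lim_null_comparison[OF always_eventually[OF allI[OF norm_qpoch_inf_minus_one_le[OF assms]]]])
  moreover have "qpoch_inf Q 0 = 1"
    by (simp add: qpoch_inf_def)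
  ultimately show ?thesis
    by (simp add: isCont_def LIM_zero_iff)
qed

definition qgauss :: "real \<Rightarrow> complex \<Rightarrow> complex" where
  "qgauss q x = qexp (q\<^sup>2) (- (x\<^sup>2))"

lemma isCont_qgauss_0:
  assumes "0 < q" "q < 1"
  shows "isCont (qgauss q) 0"
proof -
  have "isCont (qpoch_inf (q\<^sup>2)) (- (0\<^sup>2))"
    using assms by (simp add: isCont_qpoch_inf_0 power_less_one_iff)
  then have "isCont (\<lambda>x. qpoch_inf (q\<^sup>2) (- (x\<^sup>2))) 0"
    by (rule isCont_o2[rotated]) simp
  moreover have "qpoch_inf (q\<^sup>2) (- (0\<^sup>2)) \<noteq> 0"
    by (simp add: qpoch_inf_def)
  ultimately have "isCont (\<lambda>x. 1 / qpoch_inf (q\<^sup>2) (- (x\<^sup>2))) 0"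
    by (intro isCont_divide continuous_const)
  moreover have "qgauss q = (\<lambda>x. 1 / qpoch_inf (q\<^sup>2) (- (x\<^sup>2)))"
    by (simp add: qgauss_def qexp_def fun_eq_iff)
  ultimately show ?thesis
    by simp
qed

lemma qgauss_mult_q:
  assumes "0 < q" "q < 1" and "1 + x\<^sup>2 \<noteq> 0"
  shows "qgauss q (of_real q * x) = (1 + x\<^sup>2) * qgauss q x"
proof -
  define f where "f j = 1 - (- (x\<^sup>2)) * of_real ((q\<^sup>2) ^ j)" for j
  have "convergent_prod f"
    unfolding f_def using assms by (intro convergent_prod_qpoch) (auto simp: power_less_one_iff)
  have "qpoch_inf (q\<^sup>2) (- ((of_real q * x)\<^sup>2)) = (\<Prod>j. f (Suc j))"
    by (simp add: qpoch_inf_def f_def power_mult_distrib mult_ac)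
  also have "\<dots> = prodinf f / f 0"
    by (rule prodinf_split_head[OF \<open>convergent_prod f\<close>]) (simp add: f_def assms(3))
  also have "prodinf f = qpoch_inf (q\<^sup>2) (- (x\<^sup>2))"
    by (simp add: qpoch_inf_def f_def [abs_def])
  finally show ?thesis
    by (simp add: qgauss_def qexp_def f_def)
qed

text \<open>
  For \<open>F = f \<cdot> qgauss q\<close> the functional equation \<open>qgauss q (q x) = (1 + x\<^sup>2) qgauss q x\<close> gives
  \<open>qD q F x = ((f x - f (q x)) / ((1 - q) x) - x f (q x) / (1 - q)) \<cdot> qgauss q x\<close>;
  these are the power series coefficients of the bracket.
\<close>
definition qdiff_coeffs :: "real \<Rightarrow> (nat \<Rightarrow> complex) \<Rightarrow> nat \<Rightarrow> complex" where
  "qdiff_coeffs q c m = of_real ((1 - q ^ Suc m) / (1 - q)) * c (Suc m)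
     - (if m = 0 then 0 else of_real (q ^ (m - 1) / (1 - q)) * c (m - 1))"

lemma sums_power_series_diff_quotient:
  fixes Q d x :: complex
  assumes "d \<noteq> 0" "x \<noteq> 0" and entire: "\<And>y. summable (\<lambda>m. c m * y ^ m)"
  shows "(\<lambda>m. (1 - Q ^ Suc m) / d * c (Suc m) * x ^ m)
           sums ((power_series c x - power_series c (Q * x)) / (d * x))"
proof -
  have "(\<lambda>m. c m * x ^ m - c m * (Q * x) ^ m) sums (power_series c x - power_series c (Q * x))"
    unfolding power_series_def by (intro sums_diff summable_sums entire)
  then have "(\<lambda>m. c (Suc m) * x ^ Suc m - c (Suc m) * (Q * x) ^ Suc m)
      sums (power_series c x - power_series c (Q * x))"
    by (subst sums_Suc_iff) simp
  from sums_divide[OF this, of "d * x"] show ?thesis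
  proof (rule back_subst[of "\<lambda>f. f sums _"], intro ext)
    show "(c (Suc m) * x ^ Suc m - c (Suc m) * (Q * x) ^ Suc m) / (d * x)
        = (1 - Q ^ Suc m) / d * c (Suc m) * x ^ m" for m
      using assms(1,2) by (simp add: field_simps power_mult_distrib)
  qed
qed

lemma sums_power_series_shift:
  fixes Q d x :: complex
  assumes entire: "\<And>y. summable (\<lambda>m. c m * y ^ m)"
  shows "(\<lambda>m. if m = 0 then 0 else Q ^ (m - 1) / d * c (m - 1) * x ^ m)
           sums (x / d * power_series c (Q * x))"
proof (rule sums_Suc_imp)
  have "(\<lambda>m. x / d * (c m * (Q * x) ^ m)) sums (x / d * power_series c (Q * x))"
    unfolding power_series_def by (intro sums_mult summable_sums entire)
  then show "(\<lambda>m. if Suc m = 0 then 0 else Q ^ (Suc m - 1) / d * c (Suc m - 1) * x ^ Suc m)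
      sums (x / d * power_series c (Q * x))"
    by (simp add: power_mult_distrib mult_ac)
qed simp

lemma power_series_qdiff_coeffs:
  assumes "q \<noteq> 1" "x \<noteq> 0" and entire: "\<And>y. summable (\<lambda>m. c m * y ^ m)"
  shows "(power_series c x - (1 + x\<^sup>2) * power_series c (of_real q * x)) / (of_real (1 - q) * x)
         = power_series (qdiff_coeffs q c) x"
proof -
  define Q d where "Q = complex_of_real q" and "d = complex_of_real (1 - q)"
  let ?P = "power_series c x" and ?Pq = "power_series c (Q * x)"
  have "d \<noteq> 0"
    using assms(1) by (simp add: d_def)
  have "qdiff_coeffs q c m * x ^ m = (1 - Q ^ Suc m) / d * c (Suc m) * x ^ m
      - (if m = 0 then 0 else Q ^ (m - 1) / d * c (m - 1) * x ^ m)" for m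
    by (simp add: qdiff_coeffs_def Q_def d_def left_diff_distrib)
  with sums_diff[OF sums_power_series_diff_quotient[OF \<open>d \<noteq> 0\<close> \<open>x \<noteq> 0\<close> entire]
      sums_power_series_shift[OF entire]]
  have "(\<lambda>m. qdiff_coeffs q c m * x ^ m) sums ((?P - ?Pq) / (d * x) - x / d * ?Pq)"
    by (simp only:)
  then have "power_series (qdiff_coeffs q c) x = (?P - ?Pq) / (d * x) - x / d * ?Pq"
    by (simp add: power_series_def sums_iff)
  also have "\<dots> = (?P - (1 + x\<^sup>2) * ?Pq) / (d * x)"
    using \<open>d \<noteq> 0\<close> \<open>x \<noteq> 0\<close> by (simp add: field_simps power2_eq_square)
  finally show ?thesis
    by (simp add: Q_def d_def)
qed

lemma one_plus_square_neq_0: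
  fixes x :: complex
  assumes "\<bar>Im x\<bar> < 1"
  shows "1 + x\<^sup>2 \<noteq> 0"
proof
  assume "1 + x\<^sup>2 = 0"
  then have "(x - \<i>) * (x + \<i>) = 0"
    by (simp add: algebra_simps power2_eq_square)
  then have "x = \<i> \<or> x = - \<i>"
    by (simp add: eq_neg_iff_add_eq_0)
  with assms show False
    by auto
qed

lemma qdiff_quotient_power_series_qgauss:
  assumes q: "0 < q" "q < 1"
    and H: "\<And>x. \<bar>Im x\<bar> < 1 \<Longrightarrow> H x = power_series c x * qgauss q x"
    and entire: "\<And>y. summable (\<lambda>m. c m * y ^ m)"
    and x: "x \<noteq> 0" "\<bar>Im x\<bar> < 1"
  shows "(H x - H (of_real q * x)) / (of_real (1 - q) * x) = power_series (qdiff_coeffs q c) x * qgauss q x"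
proof -
  have "\<bar>Im (of_real q * x)\<bar> = q * \<bar>Im x\<bar>"
    using q by (simp add: abs_mult)
  also have "\<dots> < 1"
    using q x(2) by (metis abs_ge_zero le_less_trans mult_left_le_one_le order_less_imp_le)
  finally have "H (of_real q * x) = power_series c (of_real q * x) * ((1 + x\<^sup>2) * qgauss q x)"
    using H qgauss_mult_q[OF q one_plus_square_neq_0[OF x(2)]] by simp
  then have "(H x - H (of_real q * x)) / (of_real (1 - q) * x)
      = (power_series c x - (1 + x\<^sup>2) * power_series c (of_real q * x)) / (of_real (1 - q) * x) * qgauss q x"
    using H[OF x(2)] by (simp add: algebra_simps diff_divide_distrib)
  also have "\<dots> = power_series (qdiff_coeffs q c) x * qgauss q x"
    using q by (subst power_series_qdiff_coeffs[OF _ x(1) entire]) simp_all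
  finally show ?thesis .
qed

lemma qD_power_series_qgauss:
  assumes q: "0 < q" "q < 1"
    and H: "\<And>x. \<bar>Im x\<bar> < 1 \<Longrightarrow> H x = power_series c x * qgauss q x"
    and entire: "\<And>y. summable (\<lambda>m. c m * y ^ m)"
    and entire': "\<And>y. summable (\<lambda>m. qdiff_coeffs q c m * y ^ m)"
    and x: "\<bar>Im x\<bar> < 1"
  shows "qD q H x = power_series (qdiff_coeffs q c) x * qgauss q x"
proof (cases "x = 0")
  case False
  then show ?thesis
    using qdiff_quotient_power_series_qgauss[OF q H entire False x] by (simp add: qD_def)
next
  case True
  let ?G = "\<lambda>y. power_series (qdiff_coeffs q c) y * qgauss q y"
  have "isCont (power_series (qdiff_coeffs q c)) 0"
    unfolding power_series_def [abs_def] by (rule isCont_powser_converges_everywhere[OF entire'])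
  then have "isCont ?G 0"
    by (intro isCont_mult isCont_qgauss_0 q)
  then have "(?G \<longlongrightarrow> ?G 0) (at 0)"
    by (simp add: isCont_def)
  moreover have "eventually (\<lambda>y. y \<in> ball 0 1 - {0}) (at (0::complex))"
    by (intro eventually_at_in_open) auto
  then have "eventually (\<lambda>y. ?G y = (H y - H (of_real q * y)) / (of_real (1 - q) * y)) (at 0)"
  proof (rule eventually_mono)
    fix y :: complex assume "y \<in> ball 0 1 - {0}"
    then have "y \<noteq> 0" "\<bar>Im y\<bar> < 1"
      using abs_Im_le_cmod[of y] by auto
    then show "?G y = (H y - H (of_real q * y)) / (of_real (1 - q) * y)"
      using qdiff_quotient_power_series_qgauss[OF q H entire] by simp
  qed
  ultimately have "((\<lambda>y. (H y - H (of_real q * y)) / (of_real (1 - q) * y)) \<longlongrightarrow> ?G 0) (at 0)"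
    by (rule Lim_transform_eventually)
  then show ?thesis
    using True by (simp add: qD_def tendsto_Lim)
qed

lemma funpow_qD_power_series_qgauss:
  assumes q: "0 < q" "q < 1"
    and h: "\<And>x. \<bar>Im x\<bar> < 1 \<Longrightarrow> h x = power_series a x * qgauss q x"
    and entire: "\<And>e y. summable (\<lambda>m. (qdiff_coeffs q ^^ e) a m * y ^ m)"
    and x: "\<bar>Im x\<bar> < 1"
  shows "(qD q ^^ e) h x = power_series ((qdiff_coeffs q ^^ e) a) x * qgauss q x"
  using x
proof (induction e arbitrary: x)
  case 0
  then show ?case
    using h by simp
next
  case (Suc e)
  have "summable (\<lambda>m. qdiff_coeffs q ((qdiff_coeffs q ^^ e) a) m * y ^ m)" for y
    using entire[of "Suc e" y] by simp
  then show ?case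
    using qD_power_series_qgauss[OF q Suc.IH entire] Suc.prems by simp
qed

definition qpochhammer :: "real \<Rightarrow> nat \<Rightarrow> real" where
  "qpochhammer q m = (\<Prod>j<m. 1 - q ^ Suc j)"

lemma qpochhammer_0 [simp]: "qpochhammer q 0 = 1"
  by (simp add: qpochhammer_def)

lemma qpochhammer_Suc: "qpochhammer q (Suc m) = qpochhammer q m * (1 - q ^ Suc m)"
  by (simp add: qpochhammer_def)

lemma qpochhammer_pos:
  assumes "0 \<le> q" "q < 1"
  shows "0 < qpochhammer q m"
  unfolding qpochhammer_def using assms by (intro prod_pos) (simp add: power_less_one_iff del: power_Suc)

lemma qpochhammer_le_one:
  assumes "0 \<le> q" "q < 1"
  shows "qpochhammer q m \<le> 1"
  unfolding qpochhammer_def using assms by (intro prod_le_1) (simp add: power_le_one del: power_Suc)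

lemma inverse_qpochhammer_le:
  assumes "0 \<le> q" "q < 1"
  shows "1 / qpochhammer q m \<le> exp (1 / (1 - q)\<^sup>2)"
proof -
  have factor_le: "1 / (1 - q ^ Suc j) \<le> exp (q ^ Suc j / (1 - q))" for j
  proof -
    have "0 \<le> q ^ Suc j" "q ^ Suc j \<le> q"
      using assms by (auto simp: mult_left_le power_le_one)
    then have "1 / (1 - q ^ Suc j) = 1 + q ^ Suc j / (1 - q ^ Suc j)"
      using assms by (simp add: field_simps)
    also have "\<dots> \<le> exp (q ^ Suc j / (1 - q ^ Suc j))"
      by (rule exp_ge_add_one_self)
    also have "\<dots> \<le> exp (q ^ Suc j / (1 - q))"
      using \<open>0 \<le> q ^ Suc j\<close> \<open>q ^ Suc j \<le> q\<close> assms by (simp add: frac_le)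
    finally show ?thesis .
  qed
  have "(\<Sum>j<m. q ^ Suc j) \<le> (\<Sum>j<m. q ^ j)"
    using assms by (intro sum_mono) (simp add: mult_left_le_one_le)
  also have "\<dots> = (1 - q ^ m) / (1 - q)"
    using assms by (simp add: geometric_sum field_simps)
  also have "\<dots> \<le> 1 / (1 - q)"
    using assms by (simp add: divide_right_mono)
  finally have "(\<Sum>j<m. q ^ Suc j) / (1 - q) \<le> 1 / (1 - q)\<^sup>2"
    using assms divide_right_mono[of _ "1 / (1 - q)" "1 - q"] by (simp add: power2_eq_square)
  have "1 / qpochhammer q m = (\<Prod>j<m. 1 / (1 - q ^ Suc j))"
    by (simp add: qpochhammer_def prod_dividef)
  also have "\<dots> \<le> (\<Prod>j<m. exp (q ^ Suc j / (1 - q)))"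
    using assms by (intro prod_mono conjI factor_le) (simp add: power_le_one del: power_Suc)
  also have "\<dots> = exp ((\<Sum>j<m. q ^ Suc j) / (1 - q))"
    by (simp add: exp_sum sum_divide_distrib)
  also have "\<dots> \<le> exp (1 / (1 - q)\<^sup>2)"
    using \<open>(\<Sum>j<m. q ^ Suc j) / (1 - q) \<le> 1 / (1 - q)\<^sup>2\<close> by simp
  finally show ?thesis .
qed

text \<open>The factor \<open>1 / (p\<^sup>2; p\<^sup>2)\<^sub>m\<close> absorbs the q-integers \<open>[m + 1]\<^sub>q\<close> produced by \<^const>\<open>qdiff_coeffs\<close>.\<close>
definition gauss_majorant :: "real \<Rightarrow> real \<Rightarrow> nat \<Rightarrow> real" where
  "gauss_majorant p s m = s ^ m * p ^ (m\<^sup>2) / qpochhammer (p\<^sup>2) m"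

lemma gauss_majorant_bounds:
  assumes "0 < p" "p < 1" "0 \<le> s"
  shows "s ^ m * p ^ (m\<^sup>2) \<le> gauss_majorant p s m"
    and "gauss_majorant p s m \<le> exp (1 / (1 - p\<^sup>2)\<^sup>2) * (s ^ m * p ^ (m\<^sup>2))"
proof -
  have q: "0 \<le> p\<^sup>2" "p\<^sup>2 < 1"
    using assms by (auto simp: power_less_one_iff)
  have "0 \<le> s ^ m * p ^ (m\<^sup>2)"
    using assms by simp
  then show "s ^ m * p ^ (m\<^sup>2) \<le> gauss_majorant p s m"
    unfolding gauss_majorant_def using qpochhammer_pos[OF q] qpochhammer_le_one[OF q]
    by (simp add: le_divide_eq mult_left_le)
  show "gauss_majorant p s m \<le> exp (1 / (1 - p\<^sup>2)\<^sup>2) * (s ^ m * p ^ (m\<^sup>2))"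
    unfolding gauss_majorant_def using inverse_qpochhammer_le[OF q, of m] \<open>0 \<le> s ^ m * p ^ (m\<^sup>2)\<close>
    by (metis mult.commute mult_left_mono times_divide_eq_right mult_1_right)
qed

lemma gauss_majorant_qdiff_terms:
  fixes p s :: real and k :: nat
  assumes p: "0 < p" "p < 1" and "0 < s"
  defines "z \<equiv> p ^ (2 * k)" and "B \<equiv> s ^ k * p ^ (k\<^sup>2) / ((1 - p\<^sup>2) * qpochhammer (p\<^sup>2) (Suc k))"
  shows "(1 - (p\<^sup>2) ^ Suc (Suc k)) / (1 - p\<^sup>2) * gauss_majorant p s (Suc (Suc k)) = B * (s\<^sup>2 * z\<^sup>2 * p ^ 4)"
    and "(p\<^sup>2) ^ k / (1 - p\<^sup>2) * gauss_majorant p s k = B * (z * (1 - z * p\<^sup>2))"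
    and "gauss_majorant p s (Suc k) / ((1 - p\<^sup>2) * p * s) = B * z"
proof -
  define W where "W = qpochhammer (p\<^sup>2) (Suc k)"
  have q: "0 \<le> p\<^sup>2" "p\<^sup>2 < 1"
    using p by (auto simp: power_less_one_iff)
  have "0 \<le> z" "z \<le> 1"
    unfolding z_def using p by (auto simp: power_le_one)
  moreover have "p ^ 4 < 1"
    using p by (simp add: power_less_one_iff)
  ultimately have "z * p\<^sup>2 < 1" "z * p ^ 4 < 1"
    using q mult_left_le_one_le[of "p\<^sup>2" z] mult_left_le_one_le[of "p ^ 4" z] by auto
  have powers: "(p\<^sup>2) ^ k = z" "(p\<^sup>2) ^ Suc k = z * p\<^sup>2" "(p\<^sup>2) ^ Suc (Suc k) = z * p ^ 4"
    "p ^ (Suc k)\<^sup>2 = p ^ k\<^sup>2 * z * p" "p ^ (Suc (Suc k))\<^sup>2 = p ^ k\<^sup>2 * z\<^sup>2 * p ^ 4"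
  proof -
    have "(Suc k)\<^sup>2 = k\<^sup>2 + 2 * k + 1" "(Suc (Suc k))\<^sup>2 = k\<^sup>2 + 2 * k * 2 + 4"
      by (simp_all add: power2_eq_square algebra_simps)
    then show "(p\<^sup>2) ^ k = z" "(p\<^sup>2) ^ Suc k = z * p\<^sup>2" "(p\<^sup>2) ^ Suc (Suc k) = z * p ^ 4"
      "p ^ (Suc k)\<^sup>2 = p ^ k\<^sup>2 * z * p" "p ^ (Suc (Suc k))\<^sup>2 = p ^ k\<^sup>2 * z\<^sup>2 * p ^ 4"
      by (simp_all only: z_def power_add power_mult power_Suc power_one_right mult_ac)
        (simp_all add: power2_eq_square power_mult_distrib eval_nat_numeral)
  qed
  have qpoch: "qpochhammer (p\<^sup>2) (Suc (Suc k)) = W * (1 - z * p ^ 4)"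
    "qpochhammer (p\<^sup>2) k = W / (1 - z * p\<^sup>2)"
    using \<open>z * p\<^sup>2 < 1\<close> by (simp_all add: W_def qpochhammer_Suc powers mult.commute)
  have "0 < W"
    unfolding W_def using q by (rule qpochhammer_pos)
  then have nz: "1 - p\<^sup>2 \<noteq> 0" "W \<noteq> 0" "1 - z * p ^ 4 \<noteq> 0" "1 - z * p\<^sup>2 \<noteq> 0" "p \<noteq> 0" "s \<noteq> 0"
    using q p \<open>0 < s\<close> \<open>z * p ^ 4 < 1\<close> \<open>z * p\<^sup>2 < 1\<close> by auto
  show "(1 - (p\<^sup>2) ^ Suc (Suc k)) / (1 - p\<^sup>2) * gauss_majorant p s (Suc (Suc k)) = B * (s\<^sup>2 * z\<^sup>2 * p ^ 4)"
    using nz by (simp only: gauss_majorant_def qpoch powers B_def W_def[symmetric]) (simp add: power2_eq_square)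
  show "(p\<^sup>2) ^ k / (1 - p\<^sup>2) * gauss_majorant p s k = B * (z * (1 - z * p\<^sup>2))"
    using nz by (simp add: gauss_majorant_def qpoch powers B_def W_def[symmetric])
  show "gauss_majorant p s (Suc k) / ((1 - p\<^sup>2) * p * s) = B * z"
    using nz by (simp add: gauss_majorant_def powers B_def W_def[symmetric] mult_ac)
qed

lemma gauss_majorant_qdiff_le:
  assumes p: "0 < p" "p < 1" and s: "0 < s" "s * p \<le> 1"
  shows "(1 - (p\<^sup>2) ^ Suc m) / (1 - p\<^sup>2) * gauss_majorant p s (Suc m)
       + (if m = 0 then 0 else (p\<^sup>2) ^ (m - 1) / (1 - p\<^sup>2) * gauss_majorant p s (m - 1))
       \<le> gauss_majorant p s m / ((1 - p\<^sup>2) * p * s)"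
proof -
  have q: "0 \<le> p\<^sup>2" "p\<^sup>2 < 1"
    using p by (auto simp: power_less_one_iff)
  have sp: "(s * p)\<^sup>2 \<le> 1"
    using s p by (simp add: power_le_one)
  show ?thesis
  proof (cases m)
    case 0
    have "s * p / (1 - p\<^sup>2) \<le> 1 / (s * p) / (1 - p\<^sup>2)"
      using sp s p q by (intro divide_right_mono) (auto simp: field_simps power2_eq_square)
    then show ?thesis
      using 0 q by (simp add: gauss_majorant_def qpochhammer_Suc field_simps)
  next
    case (Suc k)
    define z where "z = p ^ (2 * k)"
    define B where "B = s ^ k * p ^ (k\<^sup>2) / ((1 - p\<^sup>2) * qpochhammer (p\<^sup>2) (Suc k))"
    have "0 \<le> B"
      using s p q qpochhammer_pos[OF q, of "Suc k"] unfolding B_def by (intro divide_nonneg_pos) auto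
    moreover have "s\<^sup>2 * z\<^sup>2 * p ^ 4 \<le> z\<^sup>2 * p\<^sup>2"
      using mult_right_mono[OF sp, of "z\<^sup>2 * p\<^sup>2"] by (simp add: power_mult_distrib algebra_simps)
    ultimately have "B * (s\<^sup>2 * z\<^sup>2 * p ^ 4) + B * (z * (1 - z * p\<^sup>2)) \<le> B * z"
      by (simp add: algebra_simps mult_left_mono power2_eq_square)
    then show ?thesis
      using gauss_majorant_qdiff_terms[OF p(1,2) s(1), of k] Suc by (simp add: z_def B_def)
  qed
qed

lemma norm_qdiff_coeffs_le:
  assumes "0 \<le> q" "q < 1" and c: "\<And>m. norm (c m) \<le> b m"
  shows "norm (qdiff_coeffs q c m)
         \<le> (1 - q ^ Suc m) / (1 - q) * b (Suc m) + (if m = 0 then 0 else q ^ (m - 1) / (1 - q) * b (m - 1))"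
proof -
  have scaled: "norm (complex_of_real r * c k) \<le> r * b k" if "0 \<le> r" for r k
    using that c[of k] by (simp add: norm_mult mult_left_mono)
  have "0 \<le> (1 - q ^ Suc m) / (1 - q)" "0 \<le> q ^ (m - 1) / (1 - q)"
    using assms by (simp_all add: power_le_one del: power_Suc)
  moreover have "norm (if m = 0 then 0 else complex_of_real (q ^ (m - 1) / (1 - q)) * c (m - 1))
      \<le> (if m = 0 then 0 else q ^ (m - 1) / (1 - q) * b (m - 1))"
    using scaled[OF \<open>0 \<le> q ^ (m - 1) / (1 - q)\<close>] by simp
  ultimately show ?thesis
    unfolding qdiff_coeffs_def by (intro order.trans[OF norm_triangle_ineq4] add_mono scaled)
qed

lemma norm_funpow_qdiff_coeffs_le:
  assumes p: "0 < p" "p < 1" and s: "0 < s" "s * p \<le> 1" and "0 \<le> C"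
    and a: "\<And>m. norm (a m) \<le> C * gauss_majorant p s m"
  shows "norm ((qdiff_coeffs (p\<^sup>2) ^^ e) a m) \<le> C * (1 / ((1 - p\<^sup>2) * p * s)) ^ e * gauss_majorant p s m"
proof (induction e arbitrary: m)
  case 0
  then show ?case
    using a by simp
next
  case (Suc e)
  let ?R = "1 / ((1 - p\<^sup>2) * p * s)"
  have q: "0 \<le> p\<^sup>2" "p\<^sup>2 < 1"
    using p by (auto simp: power_less_one_iff)
  have "0 \<le> C * ?R ^ e"
    using \<open>0 \<le> C\<close> p s q by simp
  have "norm ((qdiff_coeffs (p\<^sup>2) ^^ Suc e) a m)
      \<le> (1 - (p\<^sup>2) ^ Suc m) / (1 - p\<^sup>2) * (C * ?R ^ e * gauss_majorant p s (Suc m))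
        + (if m = 0 then 0 else (p\<^sup>2) ^ (m - 1) / (1 - p\<^sup>2) * (C * ?R ^ e * gauss_majorant p s (m - 1)))"
    unfolding funpow.simps(2) o_apply by (rule norm_qdiff_coeffs_le[OF q Suc.IH])
  also have "\<dots> = C * ?R ^ e * ((1 - (p\<^sup>2) ^ Suc m) / (1 - p\<^sup>2) * gauss_majorant p s (Suc m)
        + (if m = 0 then 0 else (p\<^sup>2) ^ (m - 1) / (1 - p\<^sup>2) * gauss_majorant p s (m - 1)))"
    by (simp add: algebra_simps)
  also have "\<dots> \<le> C * ?R ^ e * (gauss_majorant p s m / ((1 - p\<^sup>2) * p * s))"
    by (intro mult_left_mono gauss_majorant_qdiff_le p s \<open>0 \<le> C * ?R ^ e\<close>)
  finally show ?case
    by (simp add: mult_ac)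
qed

lemma norm_funpow_qdiff_coeffs_le_gaussian:
  assumes "0 < q" "q < 1" "0 < s" "s < 1 / sqrt q" "0 \<le> C"
    and a: "\<And>m. norm (a m) \<le> C * s ^ m * sqrt q ^ (m\<^sup>2)"
  shows "norm ((qdiff_coeffs q ^^ e) a m)
         \<le> C * exp (1 / (1 - q)\<^sup>2) * (1 / ((1 - q) * sqrt q * s)) ^ e * s ^ m * sqrt q ^ (m\<^sup>2)"
proof -
  define p where "p = sqrt q"
  have p: "0 < p" "p < 1" "s * p \<le> 1"
    using assms(1,2,4) by (auto simp: p_def field_simps)
  have "norm (a m) \<le> C * gauss_majorant p s m" for m
  proof -
    have "C * (s ^ m * p ^ (m\<^sup>2)) \<le> C * gauss_majorant p s m"
      using p assms(3,5) by (intro mult_left_mono gauss_majorant_bounds(1)) auto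
    with a[of m] show ?thesis
      by (simp add: p_def mult.assoc)
  qed
  then have "norm ((qdiff_coeffs (p\<^sup>2) ^^ e) a m) \<le> C * (1 / ((1 - p\<^sup>2) * p * s)) ^ e * gauss_majorant p s m"
    by (rule norm_funpow_qdiff_coeffs_le[OF p(1,2) assms(3) p(3) assms(5)])
  also have "\<dots> \<le> C * (1 / ((1 - p\<^sup>2) * p * s)) ^ e * (exp (1 / (1 - p\<^sup>2)\<^sup>2) * (s ^ m * p ^ (m\<^sup>2)))"
    using p assms(3,5) by (intro mult_left_mono gauss_majorant_bounds(2)) (auto simp: power_le_one)
  finally show ?thesis
    using assms(1) by (simp add: p_def mult_ac)
qed

context
  fixes \<nu> :: "nat \<Rightarrow> complex" and c :: "nat \<Rightarrow> nat \<Rightarrow> complex" and K R s p :: real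
  assumes coeffs_le: "\<And>e m. norm (c e m) \<le> K * R ^ e * s ^ m * p ^ (m\<^sup>2)"
    and summable_weights: "summable (\<lambda>e. norm (\<nu> e) * R ^ e)"
    and nonneg: "0 \<le> K" "0 \<le> R" "0 \<le> s" "0 \<le> p" and "p < 1"
begin

lemma norm_weighted_coeff_le:
  "norm (\<nu> e * c e m * x ^ m) \<le> (norm (\<nu> e) * R ^ e) * (K * (s * norm x) ^ m * p ^ (m\<^sup>2))"
proof -
  have "norm (\<nu> e * c e m * x ^ m) = norm (\<nu> e) * norm (c e m) * norm x ^ m"
    by (simp add: norm_mult norm_power)
  also have "\<dots> \<le> norm (\<nu> e) * (K * R ^ e * s ^ m * p ^ (m\<^sup>2)) * norm x ^ m"
    by (intro mult_right_mono mult_left_mono coeffs_le) auto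
  finally show ?thesis
    by (simp add: power_mult_distrib mult_ac)
qed

lemma norm_weighted_coeff_le':
  "norm (\<nu> e * c e m) \<le> norm (\<nu> e) * R ^ e * (K * s ^ m * p ^ (m\<^sup>2))"
  using norm_weighted_coeff_le[of e m 1] by simp

lemma summable_norm_weighted_coeffs: "summable (\<lambda>e. norm (\<nu> e * c e m))"
  by (rule summable_comparison_test'[OF summable_mult2[OF summable_weights, of "K * s ^ m * p ^ (m\<^sup>2)"]])
     (simp add: norm_weighted_coeff_le')

lemma summable_gaussian_bound: "summable (\<lambda>m. K * (s * norm x) ^ m * p ^ (m\<^sup>2))"
  using summable_mult[OF summable_power_mult_power_square[of "s * norm x" p], of K] nonneg \<open>p < 1\<close>
  by (simp add: mult_ac)

lemma summable_norm_coeffs_power_series: "summable (\<lambda>m. norm (c e m * x ^ m))"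
  using summable_norm_gaussian_power_series[of "c e", OF coeffs_le] nonneg \<open>p < 1\<close> by simp

lemma weighted_power_series_eq: "\<nu> e * power_series (c e) x = (\<Sum>m. \<nu> e * c e m * x ^ m)"
  unfolding power_series_def
  by (subst suminf_mult[symmetric]) (auto intro: summable_norm_cancel summable_norm_coeffs_power_series
      simp: mult.assoc)

lemma summable_weighted_power_series: "summable (\<lambda>e. norm (\<nu> e * power_series (c e) x))"
proof (rule summable_comparison_test'[OF summable_mult2[OF summable_weights]])
  fix e
  have "norm (\<nu> e * power_series (c e) x)
      \<le> (\<Sum>m. norm (\<nu> e) * R ^ e * (K * (s * norm x) ^ m * p ^ (m\<^sup>2)))"
    unfolding weighted_power_series_eq
    by (intro norm_suminf_le norm_weighted_coeff_le summable_mult summable_gaussian_bound)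
  also have "\<dots> = norm (\<nu> e) * R ^ e * (\<Sum>m. K * (s * norm x) ^ m * p ^ (m\<^sup>2))"
    by (rule suminf_mult[OF summable_gaussian_bound])
  finally show "norm (norm (\<nu> e * power_series (c e) x))
      \<le> norm (\<nu> e) * R ^ e * (\<Sum>m. K * (s * norm x) ^ m * p ^ (m\<^sup>2))"
    by simp
qed

lemma suminf_weighted_power_series:
  "(\<Sum>e. \<nu> e * power_series (c e) x) = power_series (\<lambda>m. \<Sum>e. \<nu> e * c e m) x"
proof -
  have "(\<Sum>e. \<nu> e * power_series (c e) x) = (\<Sum>e. \<Sum>m. \<nu> e * c e m * x ^ m)"
    by (simp only: weighted_power_series_eq)
  also have "\<dots> = (\<Sum>m. \<Sum>e. \<nu> e * c e m * x ^ m)"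
  proof (rule suminf_swap_product_bound)
    show "norm (\<nu> e * c e m * x ^ m) \<le> (norm (\<nu> e) * R ^ e) * (K * (s * norm x) ^ m * p ^ (m\<^sup>2))"
      for e m by (rule norm_weighted_coeff_le)
    show "0 \<le> norm (\<nu> e) * R ^ e" "0 \<le> K * (s * norm x) ^ m * p ^ (m\<^sup>2)" for e m
      using nonneg by simp_all
  qed (fact summable_weights summable_gaussian_bound)+
  also have "\<dots> = power_series (\<lambda>m. \<Sum>e. \<nu> e * c e m) x"
    unfolding power_series_def
    by (rule suminf_cong, rule suminf_mult2[symmetric], rule summable_norm_cancel,
        rule summable_norm_weighted_coeffs)
  finally show ?thesis .
qed

lemma norm_suminf_weighted_coeffs_le:
  "norm (\<Sum>e. \<nu> e * c e m) \<le> K * (\<Sum>e. norm (\<nu> e) * R ^ e) * s ^ m * p ^ (m\<^sup>2)"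
proof -
  have "norm (\<Sum>e. \<nu> e * c e m) \<le> (\<Sum>e. norm (\<nu> e) * R ^ e * (K * s ^ m * p ^ (m\<^sup>2)))"
    by (intro norm_suminf_le summable_mult2 summable_weights norm_weighted_coeff_le')
  also have "\<dots> = K * (\<Sum>e. norm (\<nu> e) * R ^ e) * s ^ m * p ^ (m\<^sup>2)"
    using suminf_mult2[OF summable_weights, of "K * s ^ m * p ^ (m\<^sup>2)"] by (simp add: mult_ac)
  finally show ?thesis .
qed

end

lemma powr_square_half_eq_sqrt_power:
  assumes "0 < q"
  shows "q powr (real l ^ 2 / 2) = sqrt q ^ (l\<^sup>2)"
proof -
  have "sqrt q ^ (l\<^sup>2) = (q powr (1/2)) powr real (l\<^sup>2)"
    using assms by (simp add: powr_half_sqrt powr_realpow[symmetric] del: of_nat_power)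
  also have "\<dots> = q powr (real l ^ 2 / 2)"
    by (simp add: powr_powr)
  finally show ?thesis ..
qed

lemma Ms_iff:
  assumes "0 < q" "0 \<le> s"
  shows "F \<in> Ms q s \<longleftrightarrow> (\<exists>a C. 0 \<le> C \<and> (\<forall>l. norm (a l) \<le> C * s ^ l * sqrt q ^ (l\<^sup>2))
           \<and> (\<forall>x. \<bar>Im x\<bar> < 1 \<longrightarrow> F x = power_series a x * qgauss q x))"
proof
  assume "F \<in> Ms q s"
  then show "\<exists>a C. 0 \<le> C \<and> (\<forall>l. norm (a l) \<le> C * s ^ l * sqrt q ^ (l\<^sup>2))
      \<and> (\<forall>x. \<bar>Im x\<bar> < 1 \<longrightarrow> F x = power_series a x * qgauss q x)"
    unfolding Ms_def power_series_def qgauss_def powr_square_half_eq_sqrt_power[OF assms(1)]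
    by (auto intro: less_imp_le)
next
  assume "\<exists>a C. 0 \<le> C \<and> (\<forall>l. norm (a l) \<le> C * s ^ l * sqrt q ^ (l\<^sup>2))
      \<and> (\<forall>x. \<bar>Im x\<bar> < 1 \<longrightarrow> F x = power_series a x * qgauss q x)"
  then obtain a C where "0 \<le> C" and a: "\<And>l. norm (a l) \<le> C * s ^ l * sqrt q ^ (l\<^sup>2)"
    and F: "\<And>x. \<bar>Im x\<bar> < 1 \<Longrightarrow> F x = power_series a x * qgauss q x"
    by blast
  have "norm (a l) \<le> (C + 1) * s ^ l * sqrt q ^ (l\<^sup>2)" for l
    using a[of l] mult_right_mono[of C "C + 1" "s ^ l * sqrt q ^ (l\<^sup>2)"] assms
    by (simp add: mult.assoc)
  then show "F \<in> Ms q s"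
    unfolding Ms_def powr_square_half_eq_sqrt_power[OF assms(1)] using \<open>0 \<le> C\<close> F
    by (intro CollectI exI[of _ a] exI[of _ "C + 1"]) (simp add: power_series_def qgauss_def)
qed

lemma summable_weighted_qgauss_series:
  assumes "0 < q" "q < 1" "0 \<le> s" "0 \<le> K" "0 \<le> R"
    and coeffs_le: "\<And>e m. norm (c e m) \<le> K * R ^ e * s ^ m * sqrt q ^ (m\<^sup>2)"
    and weights: "summable (\<lambda>e. norm (\<nu> e) * R ^ e)"
  shows "summable (\<lambda>e. norm (\<nu> e * power_series (c e) x * qgauss q x))"
  using summable_mult2[OF summable_weighted_power_series[OF coeffs_le weights assms(4,5,3)], of x "norm (qgauss q x)"]
    assms(1,2)
  by (simp add: norm_mult)

lemma weighted_qgauss_series_in_Ms: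
  assumes "0 < q" "q < 1" "0 \<le> s" "0 \<le> K" "0 \<le> R"
    and coeffs_le: "\<And>e m. norm (c e m) \<le> K * R ^ e * s ^ m * sqrt q ^ (m\<^sup>2)"
    and weights: "summable (\<lambda>e. norm (\<nu> e) * R ^ e)"
    and F: "\<And>x. \<bar>Im x\<bar> < 1 \<Longrightarrow> F x = (\<Sum>e. \<nu> e * power_series (c e) x * qgauss q x)"
  shows "F \<in> Ms q s"
proof -
  have sqrt_q: "0 \<le> sqrt q" "sqrt q < 1"
    using assms(1,2) by simp_all
  note weighted = summable_weighted_power_series suminf_weighted_power_series norm_suminf_weighted_coeffs_le
  note weighted = weighted[OF coeffs_le weights assms(4,5,3) sqrt_q]
  have "F x = power_series (\<lambda>m. \<Sum>e. \<nu> e * c e m) x * qgauss q x" if "\<bar>Im x\<bar> < 1" for x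
  proof -
    have "F x = (\<Sum>e. \<nu> e * power_series (c e) x) * qgauss q x"
      unfolding F[OF that] by (rule suminf_mult2[symmetric], rule summable_norm_cancel, rule weighted(1))
    then show ?thesis
      by (simp only: weighted(2))
  qed
  moreover have "0 \<le> K * (\<Sum>e. norm (\<nu> e) * R ^ e)"
    using assms(4,5) weights by (simp add: suminf_nonneg)
  ultimately show ?thesis
    unfolding Ms_iff[OF assms(1,3)] using weighted(3)
    by (intro exI[of _ "\<lambda>m. \<Sum>e. \<nu> e * c e m"] exI[of _ "K * (\<Sum>e. norm (\<nu> e) * R ^ e)"]) blast
qed

theorem lemma6p6:
  fixes q \<gamma> s :: real and h :: "complex \<Rightarrow> complex" and g :: "real \<Rightarrow> complex"
  assumes "0 < q" "q < 1"
    and "\<gamma> > 0"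
    and "0 < s" "s < 1 / sqrt q"
    and "h \<in> Ms q s"
    and "g \<in> Iinf q \<gamma>"
    and "\<forall>t::complex. norm t \<le> 1 / ((1 - q) * sqrt q * s) \<longrightarrow>
           summable (\<lambda>k. norm (qmoment q \<gamma> g k * t ^ k / of_real (qfact q k)))"
  shows "(\<forall>x. \<bar>Im x\<bar> < 1 \<longrightarrow> summable (\<lambda>e. norm (qconv_term q \<gamma> g h x e)))
         \<and> qconv q \<gamma> g h \<in> Ms q s"
proof -
  define R where "R = 1 / ((1 - q) * sqrt q * s)"
  obtain a C where "0 \<le> C" and a: "\<And>l. norm (a l) \<le> C * s ^ l * sqrt q ^ (l\<^sup>2)"
    and h: "\<And>x. \<bar>Im x\<bar> < 1 \<Longrightarrow> h x = power_series a x * qgauss q x"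
    using assms(6) Ms_iff[OF assms(1)] assms(4) by auto
  define c where "c e = (qdiff_coeffs q ^^ e) a" for e
  define \<nu> where "\<nu> e = (-1) ^ e * qmoment q \<gamma> g e / of_real (qfact q e)" for e
  have c: "norm (c e m) \<le> C * exp (1 / (1 - q)\<^sup>2) * R ^ e * s ^ m * sqrt q ^ (m\<^sup>2)" for e m
    unfolding c_def R_def by (rule norm_funpow_qdiff_coeffs_le_gaussian[OF assms(1,2,4,5) \<open>0 \<le> C\<close> a])
  have "summable (\<lambda>m. c e m * y ^ m)" for e y
    using summable_norm_gaussian_power_series[OF c] assms(1,2,4) by (simp add: summable_norm_cancel)
  then have qconv_term: "qconv_term q \<gamma> g h x e = \<nu> e * power_series (c e) x * qgauss q x"
    if "\<bar>Im x\<bar> < 1" for x e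
    using funpow_qD_power_series_qgauss[OF assms(1,2) h _ that] by (simp add: qconv_term_def \<nu>_def c_def mult.assoc)
  have "0 < R"
    using assms(1,2,4) by (simp add: R_def)
  then have "norm (complex_of_real R) \<le> 1 / ((1 - q) * sqrt q * s)"
    unfolding norm_of_real R_def by simp
  then have weights: "summable (\<lambda>e. norm (\<nu> e) * R ^ e)"
    using assms(8) \<open>0 < R\<close> by (fastforce simp: \<nu>_def norm_mult norm_divide norm_power)
  note qgauss_series = summable_weighted_qgauss_series weighted_qgauss_series_in_Ms
  note qgauss_series = qgauss_series[OF assms(1,2) _ _ _ c weights]
  show ?thesis
    using qgauss_series \<open>0 \<le> C\<close> \<open>0 < R\<close> assms(4) by (simp add: qconv_term qconv_def)
qed

end
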